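(* The category of abelian group objects in $\mathbf{DPAlg}_R$ (equivalently, by the preceding result, $DP$ algebras with zero multiplication, with $DP$ algebra maps) is equivalent to the category of left $U(0)$-modules. Under this equivalence a $DP$ algebra $A$ with zero product corresponds to its underlying $R$-module with $\phi_p$ acting as $\gamma_p$ for each prime $p$, and conversely a left $U(0)$-module $M$ becomes a $DP$ algebra with zero product and $\gamma_n=\phi_n$ (action of the element $\phi_n\in U(0)$) for all $n\ge1$.
   Context: Fix a commutative unital ring $R$; unadorned $\otimes$ means $\otimes_R$. An "algebra" means a commutative, not necessarily unital, $R$-algebra. A $DP$ algebra is an algebra $A$ with maps $\gamma_n:A\to A$ ($n\ge1$) such that for all $a,b\in A$, $r\in R$, $m,n\ge1$: $\gamma_1(a)=a$; $\gamma_n(a+b)=\gamma_n(a)+\sum_{i+j=n,\,i,j\ge1}\gamma_i(a)\gamma_j(b)+\gamma_n(b)$; $\gamma_n(ab)=a^n\gamma_n(b)$; $\gamma_n(rb)=r^n\gamma_n(b)$; $\gamma_m(a)\gamma_n(a)=\frac{(m+n)!}{m!\,n!}\gamma_{m+n}(a)$; $\gamma_m(\gamma_n(a))=\frac{(mn)!}{m!(n!)^m}\gamma_{mn}(a)$. $\mathbf{DPAlg}_R$ is the category of $DP$ algebras and algebra maps commuting with all $\gamma_n$. $U(0)$ is the (generally non-commutative, non-$R$-central) unital ring generated by $R$ and symbols $\phi_p$, one for each prime $p$, which commute with one another, subject to the relations $p\phi_p=0$ and $\phi_p r=r^p\phi_p$ for $r\in R$. Set $\phi_1=1$, $\phi_{p^e}=\phi_p^e$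 for $p$ prime and $e\ge1$, and $\phi_n=0$ if $n>1$ is not a prime power. Thus a left $U(0)$-module is an $R$-module $M$ with additive endomorphisms $\phi_p$ ($p$ prime), pairwise commuting, with $p\phi_p=0$ and $\phi_p(rx)=r^p\phi_p(x)$. *)

theory Defs
  imports "HOL-Computational_Algebra.Primes"
begin

definition is_module :: "('r::comm_ring_1 \<Rightarrow> 'a::ab_group_add \<Rightarrow> 'a) \<Rightarrow> bool" where
  "is_module smult \<longleftrightarrow>
     (\<forall>r x y. smult r (x + y) = smult r x + smult r y) \<and>
     (\<forall>r s x. smult (r + s) x = smult r x + smult s x) \<and>
     (\<forall>r s x. smult (r * s) x = smult r (smult s x)) \<and>
     (\<forall>x. smult 1 x = x)"

definition is_linear :: "('r::comm_ring_1 \<Rightarrow> 'a::ab_group_add \<Rightarrow> 'a) \<Rightarrow>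
    ('r \<Rightarrow> 'b::ab_group_add \<Rightarrow> 'b) \<Rightarrow> ('a \<Rightarrow> 'b) \<Rightarrow> bool" where
  "is_linear smultA smultB f \<longleftrightarrow>
     (\<forall>x y. f (x + y) = f x + f y) \<and> (\<forall>r x. f (smultA r x) = smultB r (f x))"

definition is_algebra :: "('r::comm_ring_1 \<Rightarrow> 'a::ab_group_add \<Rightarrow> 'a) \<Rightarrow> ('a \<Rightarrow> 'a \<Rightarrow> 'a) \<Rightarrow> bool" where
  "is_algebra smult mul \<longleftrightarrow> is_module smult \<and>
     (\<forall>a b c. mul (mul a b) c = mul a (mul b c)) \<and>
     (\<forall>a b. mul a b = mul b a) \<and>
     (\<forall>a b c. mul a (b + c) = mul a b + mul a c) \<and>
     (\<forall>r a b. mul (smult r a) b = smult r (mul a b))"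

text \<open>a^n for n \<ge> 1 in a non-unital algebra: apow mul a n = a * ... * a (n factors).\<close>
definition apow :: "('a \<Rightarrow> 'a \<Rightarrow> 'a) \<Rightarrow> 'a \<Rightarrow> nat \<Rightarrow> 'a" where
  "apow mul a n = ((\<lambda>x. mul a x) ^^ (n - 1)) a"

abbreviation natmult :: "('r::comm_ring_1 \<Rightarrow> 'a \<Rightarrow> 'a) \<Rightarrow> nat \<Rightarrow> 'a \<Rightarrow> 'a" where
  "natmult smult c x \<equiv> smult (of_nat c) x"

definition is_dp_alg :: "('r::comm_ring_1 \<Rightarrow> 'a::ab_group_add \<Rightarrow> 'a) \<Rightarrow> ('a \<Rightarrow> 'a \<Rightarrow> 'a) \<Rightarrow>
    (nat \<Rightarrow> 'a \<Rightarrow> 'a) \<Rightarrow> bool" where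
  "is_dp_alg smult mul gamma \<longleftrightarrow> is_algebra smult mul \<and>
     (\<forall>a. gamma 1 a = a) \<and>
     (\<forall>n a b. n \<ge> 1 \<longrightarrow> gamma n (a + b) =
         gamma n a + (\<Sum>i\<in>{1..<n}. mul (gamma i a) (gamma (n - i) b)) + gamma n b) \<and>
     (\<forall>n a b. n \<ge> 1 \<longrightarrow> gamma n (mul a b) = mul (apow mul a n) (gamma n b)) \<and>
     (\<forall>n r b. n \<ge> 1 \<longrightarrow> gamma n (smult r b) = smult (r ^ n) (gamma n b)) \<and>
     (\<forall>m n a. m \<ge> 1 \<longrightarrow> n \<ge> 1 \<longrightarrow>
         mul (gamma m a) (gamma n a) = natmult smult (fact (m + n) div (fact m * fact n)) (gamma (m + n) a)) \<and>
     (\<forall>m n a. m \<ge> 1 \<longrightarrow> n \<ge> 1 \<longrightarrow>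
         gamma m (gamma n a) = natmult smult (fact (m * n) div (fact m * fact n ^ m)) (gamma (m * n) a))"

definition is_dp_hom :: "('r::comm_ring_1 \<Rightarrow> 'a::ab_group_add \<Rightarrow> 'a) \<Rightarrow> ('a \<Rightarrow> 'a \<Rightarrow> 'a) \<Rightarrow> (nat \<Rightarrow> 'a \<Rightarrow> 'a) \<Rightarrow>
    ('r \<Rightarrow> 'b::ab_group_add \<Rightarrow> 'b) \<Rightarrow> ('b \<Rightarrow> 'b \<Rightarrow> 'b) \<Rightarrow> (nat \<Rightarrow> 'b \<Rightarrow> 'b) \<Rightarrow> ('a \<Rightarrow> 'b) \<Rightarrow> bool" where
  "is_dp_hom smultA mulA gA smultB mulB gB f \<longleftrightarrow> is_linear smultA smultB f \<and>
     (\<forall>a b. f (mulA a b) = mulB (f a) (f b)) \<and>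
     (\<forall>n a. n \<ge> 1 \<longrightarrow> f (gA n a) = gB n (f a))"

text \<open>Left U(0)-module: R-module with additive endomorphisms phi p (p prime),
  pairwise commuting, p phi_p = 0, phi_p (r x) = r^p phi_p x.
  Only the values of phi at primes are relevant.\<close>
definition is_U0_module :: "('r::comm_ring_1 \<Rightarrow> 'a::ab_group_add \<Rightarrow> 'a) \<Rightarrow> (nat \<Rightarrow> 'a \<Rightarrow> 'a) \<Rightarrow> bool" where
  "is_U0_module smult phi \<longleftrightarrow> is_module smult \<and>
     (\<forall>p x y. prime p \<longrightarrow> phi p (x + y) = phi p x + phi p y) \<and>
     (\<forall>p q x. prime p \<longrightarrow> prime q \<longrightarrow> phi p (phi q x) = phi q (phi p x)) \<and>
     (\<forall>p x. prime p \<longrightarrow> natmult smult p (phi p x) = 0) \<and>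
     (\<forall>p r x. prime p \<longrightarrow> phi p (smult r x) = smult (r ^ p) (phi p x))"

definition is_U0_hom :: "('r::comm_ring_1 \<Rightarrow> 'a::ab_group_add \<Rightarrow> 'a) \<Rightarrow> (nat \<Rightarrow> 'a \<Rightarrow> 'a) \<Rightarrow>
    ('r \<Rightarrow> 'b::ab_group_add \<Rightarrow> 'b) \<Rightarrow> (nat \<Rightarrow> 'b \<Rightarrow> 'b) \<Rightarrow> ('a \<Rightarrow> 'b) \<Rightarrow> bool" where
  "is_U0_hom smultA phiA smultB phiB f \<longleftrightarrow> is_linear smultA smultB f \<and>
     (\<forall>p x. prime p \<longrightarrow> f (phiA p x) = phiB p (f x))"

text \<open>Action of the element phi_n of U(0): phi_1 = 1, phi_(p^e) = phi_p^e, phi_n = 0 otherwise.\<close>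
definition phi_n :: "(nat \<Rightarrow> 'a::zero \<Rightarrow> 'a) \<Rightarrow> nat \<Rightarrow> 'a \<Rightarrow> 'a" where
  "phi_n phi n =
     (if n = 1 then id
      else if (\<exists>p e. prime p \<and> e \<ge> 1 \<and> n = p ^ e)
      then (let p = (THE p. prime p \<and> p dvd n) in phi p ^^ multiplicity p n)
      else (\<lambda>_. 0))"

abbreviation zmult :: "'a::zero \<Rightarrow> 'a \<Rightarrow> 'a" where
  "zmult \<equiv> (\<lambda>_ _. 0)"

end

theory Submission
  imports Defs "HOL-Number_Theory.Cong" "HOL-Number_Theory.Prime_Powers"
begin

(* With zero multiplication the product axiom says that (m + n choose m) kills gamma_(m+n); in
   particular n kills gamma_n. The naturals killing an element form an ideal, and for n not a prime
   power no prime divides all of n choose k (0 < k < n), so gamma_n = 0. For n = p^e the composition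
   axiom gives gamma_p (gamma_(p^e) x) = c gamma_(p^(e+1)) x with c = 1 mod p, and p kills the
   right-hand side, so gamma_(p^e) = gamma_p^e. Hence such a DP algebra is the same as an R-module
   with the operators gamma_p, which satisfy exactly the U(0)-module relations. Conversely the same
   congruences show that phi_n satisfies the DP axioms, and maps correspond because an additive map
   commuting with every phi_p commutes with every phi_n. *)

lemma prime_dvd_binomial_if_prime_power_dvd:
  fixes p n k b :: nat
  assumes p: "prime p" and k: "0 < k" "k < p ^ b" and dvd: "p ^ b dvd n"
  shows "p dvd (n choose k)"
proof (rule ccontr)
  assume "\<not> p dvd (n choose k)"
  then have "coprime (p ^ b) (n choose k)"
    using p by (simp add: prime_imp_coprime coprime_commute)
  moreover have "p ^ b dvd k * (n choose k)"
    using times_binomial_minus1_eq[of k n] k dvd by (metis dvd_mult2)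
  ultimately have "p ^ b dvd k"
    using coprime_dvd_mult_left_iff by blast
  then show False
    using k by (simp add: nat_dvd_not_less)
qed

lemma binomial_pred_prime_power_multiple_cong:
  fixes p b j k :: nat
  assumes p: "prime p" and j: "j \<ge> 1" and k: "k < p ^ b"
  shows "[int ((j * p ^ b - 1) choose k) = (-1) ^ k] (mod int p)"
  using k
proof (induction k)
  case 0
  then show ?case by simp
next
  case (Suc k)
  define N where "N = j * p ^ b - 1"
  have "Suc N = j * p ^ b"
    using j p by (simp add: N_def prime_gt_0_nat Suc_le_eq)
  then have pascal: "j * p ^ b choose Suc k = (N choose k) + (N choose Suc k)"
    by (metis binomial_Suc_Suc)
  have "p dvd (j * p ^ b choose Suc k)"
    using Suc.prems by (intro prime_dvd_binomial_if_prime_power_dvd[OF p]) auto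
  then have "[int (N choose k) + int (N choose Suc k) = 0] (mod int p)"
    unfolding pascal by (simp add: cong_0_iff flip: of_nat_add)
  moreover have "[int (N choose k) = (-1) ^ k] (mod int p)"
    using Suc by (simp add: N_def)
  ultimately have
    "[(int (N choose k) + int (N choose Suc k)) - int (N choose k) = 0 - (-1) ^ k] (mod int p)"
    by (rule cong_diff)
  then show ?case
    by (simp add: N_def)
qed

lemma binomial_pred_prime_power_multiple_cong_1:
  fixes p b j :: nat
  assumes p: "prime p" and j: "j \<ge> 1"
  shows "[(j * p ^ b - 1) choose (p ^ b - 1) = 1] (mod p)"
proof -
  have pb: "p ^ b > 0"
    using p by (simp add: prime_gt_0_nat)
  have "[int ((j * p ^ b - 1) choose (p ^ b - 1)) = (-1) ^ (p ^ b - 1)] (mod int p)"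
    using binomial_pred_prime_power_multiple_cong[OF p j, of "p ^ b - 1"] pb by simp
  also have "[(-1::int) ^ (p ^ b - 1) = 1] (mod int p)"
  proof (cases "p = 2")
    case True
    have "[(-1::int) ^ (p ^ b - 1) = 1 ^ (p ^ b - 1)] (mod 2)"
      by (rule cong_pow) (simp add: cong_iff_dvd_diff)
    then show ?thesis
      unfolding True by (simp only: power_one of_nat_numeral)
  next
    case False
    then have "odd p"
      using p prime_ge_2_nat[OF p] prime_odd_nat[OF p] by linarith
    then have "even (p ^ b - 1)"
      using pb by simp
    then show ?thesis
      by simp
  qed
  finally show ?thesis
    using cong_int_iff[of _ 1] by simp
qed

lemma fact_mult_eq_prod_binomial:
  fixes m n :: nat
  assumes n: "n \<ge> 1"
  shows "fact (m * n) = (fact m * fact n ^ m * (\<Prod>j\<in>{1..m}. (j * n - 1) choose (n - 1)) :: nat)"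
proof (induction m)
  case 0
  then show ?case by simp
next
  case (Suc m)
  have fact: "fact (Suc m * n) = (fact (m * n) * fact n * (Suc m * n choose n) :: nat)"
    using binomial_fact_lemma[of n "Suc m * n"] by (simp add: algebra_simps)
  have "n * (Suc m * n choose n) = Suc m * n * ((Suc m * n - 1) choose (n - 1))"
    using times_binomial_minus1_eq[of n "Suc m * n"] n by simp
  then have binom: "Suc m * n choose n = Suc m * ((Suc m * n - 1) choose (n - 1))"
    using n by (metis mult.assoc mult.commute nat_mult_eq_cancel1 not_one_le_zero neq0_conv)
  have prod: "(\<Prod>j\<in>{1..Suc m}. (j * n - 1) choose (n - 1)) =
      (\<Prod>j\<in>{1..m}. (j * n - 1) choose (n - 1)) * ((Suc m * n - 1) choose (n - 1))"
    by (simp add: prod.nat_ivl_Suc')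
  show ?case
    unfolding fact binom prod Suc.IH by (simp add: algebra_simps)
qed

lemma fact_mult_prime_power_div_cong_1:
  fixes p m b :: nat
  assumes p: "prime p"
  shows "[fact (m * p ^ b) div (fact m * fact (p ^ b) ^ m) = 1] (mod p)"
proof -
  have "fact (m * p ^ b) div (fact m * fact (p ^ b) ^ m) =
        (\<Prod>j\<in>{1..m}. (j * p ^ b - 1) choose (p ^ b - 1))"
    using fact_mult_eq_prod_binomial[of "p ^ b" m] p by (simp add: prime_gt_0_nat Suc_le_eq)
  also have "[\<dots> = (\<Prod>j\<in>{1..m}. 1)] (mod p)"
    by (rule cong_prod) (use binomial_pred_prime_power_multiple_cong_1[OF p] in auto)
  finally show ?thesis by simp
qed

lemma exists_binomial_not_dvd_if_not_primepow:
  fixes n p :: nat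
  assumes n: "n \<ge> 2" "\<not> primepow n" and p: "prime p" "p dvd n"
  shows "\<exists>k. 0 < k \<and> k < n \<and> \<not> p dvd (n choose k)"
proof -
  define e where "e = multiplicity p n"
  obtain m where m: "n = p ^ e * m" "\<not> p dvd m"
    using multiplicity_decompose'[of n p] n p unfolding e_def
    by (metis not_prime_unit not_numeral_le_zero)
  have e: "e > 0"
    using p n by (simp add: e_def prime_multiplicity_gt_zero_iff)
  have "m \<noteq> 1"
    using n m e p by auto
  moreover have "m \<noteq> 0"
    using m(2) by (metis dvd_0_right)
  ultimately have m2: "m \<ge> 2" by simp
  have pe: "p ^ e > 0"
    using p by (simp add: prime_gt_0_nat)
  then have lt: "p ^ e < n"
    using m2 m(1) by simp
  have "p ^ e * (n choose p ^ e) = p ^ e * (m * ((m * p ^ e - 1) choose (p ^ e - 1)))"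
    using times_binomial_minus1_eq[of "p ^ e" n] pe m(1) by (simp add: ac_simps)
  then have binom: "n choose p ^ e = m * ((m * p ^ e - 1) choose (p ^ e - 1))"
    using nat_mult_eq_cancel1[OF pe] by blast
  have "\<not> p dvd ((m * p ^ e - 1) choose (p ^ e - 1))"
    using binomial_pred_prime_power_multiple_cong_1[OF p(1), of m e] m2 prime_gt_1_nat[OF p(1)]
    by (simp add: cong_def dvd_eq_mod_eq_0)
  then have "\<not> p dvd (n choose p ^ e)"
    unfolding binom using m(2) p(1) prime_dvd_mult_iff by blast
  then show ?thesis
    using pe lt by blast
qed

lemma primepow_mult_cases:
  fixes m n :: nat
  assumes "primepow (m * n)" "m \<noteq> 1" "n \<noteq> 1"
  obtains p i j where "prime p" "0 < i" "0 < j" "m = p ^ i" "n = p ^ j"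
proof -
  obtain p k where p: "prime p" "m * n = p ^ k"
    using assms(1) by (auto simp: primepow_def)
  then obtain i j where "m = p ^ i" "n = p ^ j"
    using prime_power_mult_nat by blast
  with assms p that show ?thesis by auto
qed

lemma nat_primepow_cases:
  fixes n :: nat
  obtains "n = 1" | p e where "prime p" "0 < e" "n = p ^ e" | "n \<noteq> 1" "\<not> primepow n"
  by (auto simp: primepow_def)

lemma funpow_intertwine:
  assumes "\<And>x. f (F x) = G (f x)"
  shows "f ((F ^^ n) x) = (G ^^ n) (f x)"
  by (induction n) (simp_all add: assms)

lemma additive_funpow:
  fixes f :: "'a::ab_group_add \<Rightarrow> 'a"
  shows "additive f \<Longrightarrow> additive (f ^^ n)"
  by (induction n) (auto simp: additive_def)

lemma module_smult_zero:
  "is_module sm \<Longrightarrow> sm r 0 = 0"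
  unfolding is_module_def by (metis add_cancel_left_left add_0)

lemma module_of_nat_mult:
  "is_module sm \<Longrightarrow> natmult sm (a * b) x = natmult sm a (natmult sm b x)"
  unfolding is_module_def by simp

lemma module_smult_one:
  "is_module sm \<Longrightarrow> sm 1 x = x"
  unfolding is_module_def by simp

lemma module_of_nat_gcd_eq_0:
  fixes sm :: "'r::comm_ring_1 \<Rightarrow> 'a::ab_group_add \<Rightarrow> 'a"
  assumes M: "is_module sm" and "natmult sm a g = 0" "natmult sm b g = 0"
  shows "natmult sm (gcd a b) g = 0"
proof -
  obtain u v :: int where "u * int a + v * int b = gcd (int a) (int b)"
    using bezout_int by blast
  then have "(of_nat (gcd a b) :: 'r) = of_int u * of_nat a + of_int v * of_nat b"
    by (metis gcd_int_int_eq of_int_add of_int_mult of_int_of_nat_eq)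
  then show ?thesis
    using M assms module_smult_zero[OF M] unfolding is_module_def by simp
qed

lemma module_of_nat_cong:
  fixes sm :: "'r::comm_ring_1 \<Rightarrow> 'a::ab_group_add \<Rightarrow> 'a"
  assumes M: "is_module sm" and p: "natmult sm p g = 0" and cd: "[c = d] (mod p)"
  shows "natmult sm c g = natmult sm d g"
proof -
  obtain k1 k2 where "d + k1 * p = c + k2 * p"
    using cd cong_iff_lin_nat by blast
  then have "natmult sm (d + k1 * p) g = natmult sm (c + k2 * p) g"
    by simp
  then show ?thesis
    using M p module_smult_zero[OF M] unfolding is_module_def by simp
qed

text \<open>The naturals killing g form an ideal of \<open>\<nat>\<close>; its generator has no prime factor.\<close>
lemma module_eq_0_if_annihilators_coprime:
  assumes M: "is_module sm" and n: "n > 0" "natmult sm n g = 0"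
    and coprime:
      "\<And>p. prime p \<Longrightarrow> p dvd n \<Longrightarrow> \<exists>c. \<not> p dvd c \<and> natmult sm c g = 0"
  shows "g = 0"
proof -
  define d where "d = (LEAST d. d > 0 \<and> natmult sm d g = 0)"
  have d: "d > 0" "natmult sm d g = 0"
    using LeastI[of "\<lambda>d. d > 0 \<and> natmult sm d g = 0" n] n by (simp_all add: d_def)
  have d_dvd: "d dvd c" if "natmult sm c g = 0" for c
  proof -
    have "natmult sm (gcd d c) g = 0"
      using module_of_nat_gcd_eq_0[OF M d(2) that] .
    then have "d \<le> gcd d c"
      using d(1) unfolding d_def by (intro Least_le) simp
    then have "gcd d c = d"
      using d(1) by (simp add: le_antisym)
    then show ?thesis
      by (metis gcd_dvd2)
  qed
  have "d = 1"
  proof (rule ccontr)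
    assume "d \<noteq> 1"
    then obtain p where p: "prime p" "p dvd d"
      using prime_factor_nat by blast
    have "p dvd n"
      using p(2) d_dvd[OF n(2)] by (rule dvd_trans)
    then obtain c where "\<not> p dvd c" "natmult sm c g = 0"
      using coprime p(1) by blast
    then show False
      using p(2) d_dvd dvd_trans by blast
  qed
  then show ?thesis
    using d(2) module_smult_one[OF M] by simp
qed

lemma phi_n_one [simp]: "phi_n phi (Suc 0) = id"
  by (simp add: phi_n_def)

lemma phi_n_prime_power:
  assumes p: "prime p" and e: "0 < e"
  shows "phi_n phi (p ^ e) = phi p ^^ e"
proof -
  have "p ^ e \<noteq> 1"
    using prime_gt_1_nat[OF p] e by simp
  moreover have "(THE q. prime q \<and> q dvd p ^ e) = p"
    using p e by (intro the_equality) (auto simp: prime_dvd_power primes_dvd_imp_eq)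
  moreover have "\<exists>q d. prime q \<and> d \<ge> 1 \<and> p ^ e = q ^ d"
    using p e by (auto simp: Suc_le_eq)
  ultimately show ?thesis
    using p by (simp add: phi_n_def Let_def prime_imp_prime_elem)
qed

lemma phi_n_prime: "prime p \<Longrightarrow> phi_n phi p = phi p"
  using phi_n_prime_power[of p 1] by simp

lemma phi_n_not_primepow:
  assumes "n \<noteq> 1" "\<not> primepow n"
  shows "phi_n phi n = (\<lambda>_. 0)"
proof -
  have "\<not> (\<exists>p e. prime p \<and> e \<ge> 1 \<and> n = p ^ e)"
    using assms(2) by (auto simp: primepow_def Suc_le_eq)
  then show ?thesis
    using assms(1) unfolding phi_n_def by auto
qed

lemma phi_n_intertwine:
  assumes f: "additive f" and comm: "\<And>p x. prime p \<Longrightarrow> f (phiA p x) = phiB p (f x)"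
  shows "f (phi_n phiA n x) = phi_n phiB n (f x)"
proof (cases n rule: nat_primepow_cases)
  case 1
  then show ?thesis by simp
next
  case (2 p e)
  then show ?thesis
    using funpow_intertwine[of f "phiA p" "phiB p"] comm by (simp add: phi_n_prime_power)
next
  case 3
  then show ?thesis
    using additive.zero[OF f] by (simp add: phi_n_not_primepow)
qed

context
  fixes sm :: "'r::comm_ring_1 \<Rightarrow> 'a::ab_group_add \<Rightarrow> 'a" and gamma :: "nat \<Rightarrow> 'a \<Rightarrow> 'a"
  assumes dp: "is_dp_alg sm zmult gamma"
begin

lemma zero_mult_dp_module: "is_module sm"
  using dp by (simp add: is_dp_alg_def is_algebra_def)

lemma zero_mult_dp_gamma_1: "gamma 1 a = a"
  using dp by (simp add: is_dp_alg_def)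

lemma zero_mult_dp_gamma_add: "n \<ge> 1 \<Longrightarrow> gamma n (a + b) = gamma n a + gamma n b"
  using dp by (simp add: is_dp_alg_def)

lemma zero_mult_dp_gamma_smult: "n \<ge> 1 \<Longrightarrow> gamma n (sm r b) = sm (r ^ n) (gamma n b)"
  using dp by (simp add: is_dp_alg_def)

lemma zero_mult_dp_gamma_comp:
  "m \<ge> 1 \<Longrightarrow> n \<ge> 1 \<Longrightarrow>
   gamma m (gamma n a) = natmult sm (fact (m * n) div (fact m * fact n ^ m)) (gamma (m * n) a)"
  using dp by (simp add: is_dp_alg_def)

lemma zero_mult_dp_binomial_annihilates:
  assumes "0 < k" "k < n"
  shows "natmult sm (n choose k) (gamma n a) = 0"
proof -
  have product: "\<forall>m n a. m \<ge> 1 \<longrightarrow> n \<ge> 1 \<longrightarrow>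
      (0::'a) = natmult sm (fact (m + n) div (fact m * fact n)) (gamma (m + n) a)"
    using dp unfolding is_dp_alg_def by blast
  have "(0::'a) = natmult sm (fact (k + (n - k)) div (fact k * fact (n - k))) (gamma (k + (n - k)) a)"
    using product[rule_format, of k "n - k" a] assms by simp
  then show ?thesis
    using assms by (simp add: binomial_fact')
qed

lemma zero_mult_dp_self_annihilates: "n \<ge> 2 \<Longrightarrow> natmult sm n (gamma n a) = 0"
  using zero_mult_dp_binomial_annihilates[of 1 n] by simp

lemma zero_mult_dp_gamma_not_primepow:
  assumes n: "n \<ge> 2" "\<not> primepow n"
  shows "gamma n a = 0"
proof (rule module_eq_0_if_annihilators_coprime[OF zero_mult_dp_module])
  show "n > 0" "natmult sm n (gamma n a) = 0"
    using n zero_mult_dp_self_annihilates by simp_all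
  fix p assume "prime p" "p dvd n"
  then obtain k where "0 < k" "k < n" "\<not> p dvd (n choose k)"
    using exists_binomial_not_dvd_if_not_primepow n by blast
  then show "\<exists>c. \<not> p dvd c \<and> natmult sm c (gamma n a) = 0"
    using zero_mult_dp_binomial_annihilates by blast
qed

lemma zero_mult_dp_gamma_prime_comp:
  assumes p: "prime p"
  shows "gamma p (gamma (p ^ e) x) = gamma (p ^ Suc e) x"
proof -
  define g where "g = gamma (p ^ Suc e) x"
  define c :: nat where "c = fact (p * p ^ e) div (fact p * fact (p ^ e) ^ p)"
  have M: "is_module sm" by (rule zero_mult_dp_module)
  have p2: "p \<ge> 2"
    using p by (rule prime_ge_2_nat)
  have comp: "gamma p (gamma (p ^ e) x) = natmult sm c g"
    using zero_mult_dp_gamma_comp[of p "p ^ e" x] p2 p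
    by (simp add: c_def g_def prime_gt_0_nat Suc_le_eq)
  have c: "[c = 1] (mod p)"
    unfolding c_def by (rule fact_mult_prime_power_div_cong_1[OF p])
  have "natmult sm (p * c) g = 0"
    using comp zero_mult_dp_self_annihilates[OF p2] module_of_nat_mult[OF M] by metis
  moreover have "natmult sm (p ^ Suc e) g = 0"
    unfolding g_def using p2 self_le_power[of p "Suc e"] by (intro zero_mult_dp_self_annihilates) linarith
  moreover have "coprime c (p ^ e)"
    using c p by (metis cong_imp_coprime cong_sym coprime_1_left coprime_power_right_iff)
  then have "gcd (p * c) (p ^ Suc e) = p"
    by (simp add: gcd_mult_distrib_nat[symmetric])
  ultimately have "natmult sm p g = 0"
    using module_of_nat_gcd_eq_0[OF M] by metis
  then have "natmult sm c g = g"
    using module_of_nat_cong[OF M _ c] module_smult_one[OF M] by simp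
  then show ?thesis
    using comp g_def by simp
qed

lemma zero_mult_dp_gamma_prime_power: "prime p \<Longrightarrow> gamma (p ^ e) = gamma p ^^ e"
proof (induction e)
  case 0
  then show ?case
    using zero_mult_dp_gamma_1 by auto
next
  case (Suc e)
  show ?case
  proof
    fix x
    show "gamma (p ^ Suc e) x = (gamma p ^^ Suc e) x"
      using zero_mult_dp_gamma_prime_comp[OF Suc.prems, of e x] Suc.IH[OF Suc.prems] by simp
  qed
qed

lemma zero_mult_dp_phi_n:
  assumes "n \<ge> 1"
  shows "phi_n gamma n = gamma n"
proof (cases n rule: nat_primepow_cases)
  case 1
  then show ?thesis
    using zero_mult_dp_gamma_1 by auto
next
  case (2 p e)
  then show ?thesis
    by (simp add: phi_n_prime_power zero_mult_dp_gamma_prime_power)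
next
  case 3
  then show ?thesis
    using assms zero_mult_dp_gamma_not_primepow by (auto simp: phi_n_not_primepow)
qed

lemma zero_mult_dp_is_U0_module: "is_U0_module sm gamma"
  unfolding is_U0_module_def
proof (intro conjI allI impI)
  show "is_module sm"
    by (rule zero_mult_dp_module)
next
  fix p :: nat and x y
  assume "prime p"
  then show "gamma p (x + y) = gamma p x + gamma p y"
    by (intro zero_mult_dp_gamma_add prime_ge_1_nat)
next
  fix p :: nat and x
  assume "prime p"
  then show "natmult sm p (gamma p x) = 0"
    by (intro zero_mult_dp_self_annihilates prime_ge_2_nat)
next
  fix p :: nat and r x
  assume "prime p"
  then show "gamma p (sm r x) = sm (r ^ p) (gamma p x)"
    by (intro zero_mult_dp_gamma_smult prime_ge_1_nat)
next
  fix p q :: nat and x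
  assume p: "prime p" and q: "prime q"
  show "gamma p (gamma q x) = gamma q (gamma p x)"
  proof (cases "p = q")
    case False
    \<comment> \<open>Both sides are multiples of gamma_(pq), and pq is not a prime power.\<close>
    have "p * q \<ge> 2 * 1"
      using prime_ge_2_nat[OF p] prime_ge_1_nat[OF q] by (rule mult_le_mono)
    then have "gamma (p * q) x = 0"
      using p q False by (intro zero_mult_dp_gamma_not_primepow not_primepowI[of p q]) auto
    then show ?thesis
      using zero_mult_dp_gamma_comp[of p q x] zero_mult_dp_gamma_comp[of q p x]
        prime_ge_1_nat[OF p] prime_ge_1_nat[OF q] module_smult_zero[OF zero_mult_dp_module]
      by (simp add: mult.commute)
  qed simp
qed

end

context
  fixes sm :: "'r::comm_ring_1 \<Rightarrow> 'a::ab_group_add \<Rightarrow> 'a" and phi :: "nat \<Rightarrow> 'a \<Rightarrow> 'a"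
  assumes U: "is_U0_module sm phi"
begin

lemma U0_module_is_module: "is_module sm"
  using U by (simp add: is_U0_module_def)

lemma U0_phi_additive: "prime p \<Longrightarrow> additive (phi p)"
  using U by (simp add: is_U0_module_def additive_def)

lemma U0_phi_commute: "prime p \<Longrightarrow> prime q \<Longrightarrow> phi p (phi q x) = phi q (phi p x)"
  using U by (simp add: is_U0_module_def)

lemma U0_phi_annihilated: "prime p \<Longrightarrow> natmult sm p (phi p x) = 0"
  using U by (simp add: is_U0_module_def)

lemma U0_phi_smult: "prime p \<Longrightarrow> phi p (sm r x) = sm (r ^ p) (phi p x)"
  using U by (simp add: is_U0_module_def)

lemma U0_phi_iterate_annihilated: "prime p \<Longrightarrow> 0 < e \<Longrightarrow> natmult sm p ((phi p ^^ e) x) = 0"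
  using U0_phi_annihilated by (cases e) simp_all

lemma U0_phi_iterate_smult:
  "prime p \<Longrightarrow> (phi p ^^ e) (sm r x) = sm (r ^ (p ^ e)) ((phi p ^^ e) x)"
  by (induction e) (simp_all add: U0_phi_smult power_mult[symmetric] mult.commute)

lemma U0_phi_iterates_distinct_primes:
  assumes p: "prime p" and q: "prime q" and "p \<noteq> q" "0 < i" "0 < j"
  shows "(phi p ^^ i) ((phi q ^^ j) x) = 0"
proof -
  have M: "is_module sm" by (rule U0_module_is_module)
  define w where "w = (phi p ^^ i) ((phi q ^^ j) x)"
  have "(phi q ^^ j) (phi p y) = phi p ((phi q ^^ j) y)" for y
    using U0_phi_commute[OF p q] by (rule funpow_intertwine[symmetric])
  then have w_swap: "w = (phi q ^^ j) ((phi p ^^ i) x)"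
    unfolding w_def by (rule funpow_intertwine[where f = "phi q ^^ j", symmetric])
  have "natmult sm p w = 0"
    unfolding w_def using U0_phi_iterate_annihilated[OF p assms(4)] .
  moreover have "natmult sm q w = 0"
    unfolding w_swap using U0_phi_iterate_annihilated[OF q assms(5)] .
  ultimately have "natmult sm (gcd p q) w = 0"
    by (rule module_of_nat_gcd_eq_0[OF M])
  then show ?thesis
    using assms(1-3) module_smult_one[OF M] by (simp add: primes_coprime w_def)
qed

lemma U0_phi_n_additive: "additive (phi_n phi n)"
proof (cases n rule: nat_primepow_cases)
  case (2 p e)
  then show ?thesis
    by (simp add: phi_n_prime_power additive_funpow U0_phi_additive)
qed (simp_all add: phi_n_not_primepow additive_def)

lemma U0_phi_n_smult: "phi_n phi n (sm r b) = sm (r ^ n) (phi_n phi n b)"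
proof (cases n rule: nat_primepow_cases)
  case 1
  then show ?thesis by simp
next
  case (2 p e)
  then show ?thesis by (simp add: phi_n_prime_power U0_phi_iterate_smult)
next
  case 3
  then show ?thesis by (simp add: phi_n_not_primepow module_smult_zero[OF U0_module_is_module])
qed

lemma U0_phi_n_binomial_annihilates:
  assumes k: "0 < k" "k < n"
  shows "natmult sm (n choose k) (phi_n phi n a) = 0"
proof (cases n rule: nat_primepow_cases)
  case (2 p e)
  then obtain t where "n choose k = t * p"
    using prime_dvd_binomial_if_prime_power_dvd[of p k e n] k by (metis dvd_refl dvd_def mult.commute)
  then show ?thesis
    using 2 U0_phi_iterate_annihilated module_of_nat_mult[OF U0_module_is_module]
      module_smult_zero[OF U0_module_is_module] by (simp add: phi_n_prime_power)
qed (use k in \<open>simp_all add: phi_n_not_primepow module_smult_zero[OF U0_module_is_module]\<close>)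

lemma U0_phi_n_comp_not_primepow:
  assumes "m \<noteq> 1" "n \<noteq> 1" "\<not> primepow (m * n)"
  shows "phi_n phi m (phi_n phi n a) = 0"
proof (cases m rule: nat_primepow_cases)
  case (2 p i)
  show ?thesis
  proof (cases n rule: nat_primepow_cases)
    case (2 q j)
    have "p \<noteq> q"
      using \<open>m = p ^ i\<close> \<open>prime p\<close> \<open>0 < i\<close> assms(3) 2 by (auto simp flip: power_add)
    then show ?thesis
      using \<open>m = p ^ i\<close> \<open>prime p\<close> \<open>0 < i\<close> 2
      by (simp add: phi_n_prime_power U0_phi_iterates_distinct_primes)
  next
    case 3
    then show ?thesis
      using additive.zero[OF U0_phi_n_additive] by (simp add: phi_n_not_primepow)
  qed (use assms in simp)
qed (use assms in \<open>simp_all add: phi_n_not_primepow\<close>)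

lemma U0_phi_n_comp:
  "phi_n phi m (phi_n phi n a) =
    natmult sm (fact (m * n) div (fact m * fact n ^ m)) (phi_n phi (m * n) a)"
proof -
  have M: "is_module sm" by (rule U0_module_is_module)
  consider "m = 1" | "n = 1" | "m \<noteq> 1" "n \<noteq> 1" "primepow (m * n)"
    | "m \<noteq> 1" "n \<noteq> 1" "\<not> primepow (m * n)"
    by blast
  then show ?thesis
  proof cases
    case 3
    then obtain p i j where p: "prime p" "0 < i" "0 < j" and mn: "m = p ^ i" "n = p ^ j"
      by (elim primepow_mult_cases)
    define g where "g = (phi p ^^ (i + j)) a"
    have "[fact (m * n) div (fact m * fact n ^ m) = 1] (mod p)"
      unfolding mn(2) by (rule fact_mult_prime_power_div_cong_1[OF p(1)])
    then have "natmult sm (fact (m * n) div (fact m * fact n ^ m)) g = g"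
      using module_of_nat_cong[OF M U0_phi_iterate_annihilated[OF p(1)]] module_smult_one[OF M] p
      unfolding g_def by simp
    then show ?thesis
      using p by (simp add: mn g_def phi_n_prime_power funpow_add flip: power_add)
  next
    case 4
    then show ?thesis
      using U0_phi_n_comp_not_primepow module_smult_zero[OF M] by (simp add: phi_n_not_primepow)
  qed (simp_all add: module_smult_one[OF M])
qed

lemma U0_module_zero_mult_dp: "is_dp_alg sm zmult (phi_n phi)"
  unfolding is_dp_alg_def
proof (intro conjI allI impI)
  show "is_algebra sm zmult"
    using U0_module_is_module by (simp add: is_algebra_def module_smult_zero)
  fix m n :: nat and a b r
  show "phi_n phi 1 a = a"
    by simp
  show "phi_n phi n (a + b) = phi_n phi n a + (\<Sum>i\<in>{1..<n}. 0) + phi_n phi n b"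
    using additive.add[OF U0_phi_n_additive] by simp
  show "phi_n phi n 0 = 0"
    by (rule additive.zero[OF U0_phi_n_additive])
  assume m: "m \<ge> 1" and n: "n \<ge> 1"
  show "0 = natmult sm (fact (m + n) div (fact m * fact n)) (phi_n phi (m + n) a)"
    using U0_phi_n_binomial_annihilates[of m "m + n" a] m n by (simp add: binomial_fact')
  show "phi_n phi m (phi_n phi n a) =
      natmult sm (fact (m * n) div (fact m * fact n ^ m)) (phi_n phi (m * n) a)"
    by (rule U0_phi_n_comp)
  show "phi_n phi n (sm r b) = sm (r ^ n) (phi_n phi n b)"
    by (rule U0_phi_n_smult)
qed

end

lemma zero_mult_dp_hom_iff_U0_hom:
  assumes A: "is_dp_alg smA zmult gA" and B: "is_dp_alg smB zmult gB"
  shows "is_dp_hom smA zmult gA smB zmult gB f \<longleftrightarrow> is_U0_hom smA gA smB gB f"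
proof
  assume "is_dp_hom smA zmult gA smB zmult gB f"
  then show "is_U0_hom smA gA smB gB f"
    unfolding is_dp_hom_def is_U0_hom_def using prime_ge_1_nat by blast
next
  assume "is_U0_hom smA gA smB gB f"
  then have lin: "is_linear smA smB f" and comm: "\<And>p x. prime p \<Longrightarrow> f (gA p x) = gB p (f x)"
    by (simp_all add: is_U0_hom_def)
  from lin have f: "additive f"
    unfolding is_linear_def by (simp add: additive.intro)
  have "f (gA n a) = gB n (f a)" if "n \<ge> 1" for n a
  proof -
    have "f (phi_n gA n a) = phi_n gB n (f a)"
      using f comm by (rule phi_n_intertwine)
    then show ?thesis
      by (simp only: zero_mult_dp_phi_n[OF A that] zero_mult_dp_phi_n[OF B that])
  qed
  then show "is_dp_hom smA zmult gA smB zmult gB f"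
    using lin additive.zero[OF f] by (simp add: is_dp_hom_def)
qed

lemma U0_hom_iff_zero_mult_dp_hom:
  "is_U0_hom smA phiA smB phiB f \<longleftrightarrow> is_dp_hom smA zmult (phi_n phiA) smB zmult (phi_n phiB) f"
proof
  assume "is_U0_hom smA phiA smB phiB f"
  then have lin: "is_linear smA smB f" and comm: "\<And>p x. prime p \<Longrightarrow> f (phiA p x) = phiB p (f x)"
    by (simp_all add: is_U0_hom_def)
  from lin have f: "additive f"
    unfolding is_linear_def by (simp add: additive.intro)
  have "f (phi_n phiA n x) = phi_n phiB n (f x)" for n x
    using f comm by (rule phi_n_intertwine)
  then show "is_dp_hom smA zmult (phi_n phiA) smB zmult (phi_n phiB) f"
    using lin additive.zero[OF f] by (simp add: is_dp_hom_def)
next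
  assume hom: "is_dp_hom smA zmult (phi_n phiA) smB zmult (phi_n phiB) f"
  have "f (phiA p x) = phiB p (f x)" if "prime p" for p x
  proof -
    have "f (phi_n phiA p x) = phi_n phiB p (f x)"
      using hom prime_ge_1_nat[OF that] unfolding is_dp_hom_def by blast
    then show ?thesis
      by (simp only: phi_n_prime[OF that])
  qed
  then show "is_U0_hom smA phiA smB phiB f"
    using hom unfolding is_dp_hom_def is_U0_hom_def by blast
qed

theorem mainTheorem3:
  fixes smultA :: "'r::comm_ring_1 \<Rightarrow> 'a::ab_group_add \<Rightarrow> 'a"
    and smultB :: "'r \<Rightarrow> 'b::ab_group_add \<Rightarrow> 'b"
  shows
    \<comment> \<open>objects: DP algebra with zero product \<mapsto> U(0)-module with phi_p = gamma_p\<close>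
    "(\<forall>gamma. is_dp_alg smultA zmult gamma \<longrightarrow> is_U0_module smultA gamma)
     \<comment> \<open>objects: U(0)-module \<mapsto> DP algebra with zero product and gamma_n = phi_n\<close>
   \<and> (\<forall>phi. is_U0_module smultA phi \<longrightarrow> is_dp_alg smultA zmult (phi_n phi))
     \<comment> \<open>the two constructions are mutually inverse\<close>
   \<and> (\<forall>gamma. is_dp_alg smultA zmult gamma \<longrightarrow> (\<forall>n\<ge>1. phi_n gamma n = gamma n))
   \<and> (\<forall>phi. is_U0_module smultA phi \<longrightarrow> (\<forall>p. prime p \<longrightarrow> phi_n phi p = phi p))
     \<comment> \<open>morphisms correspond (functors are fully faithful, identity on maps)\<close>
   \<and> (\<forall>gA gB f. is_dp_alg smultA zmult gA \<longrightarrow> is_dp_alg smultB zmult gB \<longrightarrow>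
        (is_dp_hom smultA zmult gA smultB zmult gB f \<longleftrightarrow> is_U0_hom smultA gA smultB gB f))
   \<and> (\<forall>phiA phiB f. is_U0_module smultA phiA \<longrightarrow> is_U0_module smultB phiB \<longrightarrow>
        (is_U0_hom smultA phiA smultB phiB f \<longleftrightarrow>
         is_dp_hom smultA zmult (phi_n phiA) smultB zmult (phi_n phiB) f))"
proof (intro conjI allI impI)
  show "is_U0_module smultA gamma" if "is_dp_alg smultA zmult gamma" for gamma
    using that by (rule zero_mult_dp_is_U0_module)
  show "is_dp_alg smultA zmult (phi_n phi)" if "is_U0_module smultA phi" for phi
    using that by (rule U0_module_zero_mult_dp)
  show "phi_n gamma n = gamma n" if "is_dp_alg smultA zmult gamma" "n \<ge> 1" for gamma n
    using that by (rule zero_mult_dp_phi_n)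
  show "phi_n phi p = phi p" if "prime p" for phi p
    using that by (rule phi_n_prime)
  show "is_dp_hom smultA zmult gA smultB zmult gB f \<longleftrightarrow> is_U0_hom smultA gA smultB gB f"
    if "is_dp_alg smultA zmult gA" "is_dp_alg smultB zmult gB" for gA gB f
    using that by (rule zero_mult_dp_hom_iff_U0_hom)
  show "is_U0_hom smultA phiA smultB phiB f \<longleftrightarrow>
      is_dp_hom smultA zmult (phi_n phiA) smultB zmult (phi_n phiB) f" for phiA phiB f
    by (rule U0_hom_iff_zero_mult_dp_hom)
qed

end
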